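(* Let $n\ge0$ and let $H_n$ be the pyrene system with $n$ pyrene fragments. Then the sum of the anti-forcing numbers of all perfect matchings of $H_n$ is $$\sum_{M}af(H_n,M)=\frac{3\sqrt{2}}{64}(3-2\sqrt{2})^n+\frac{17-12\sqrt{2}}{16}n(3-2\sqrt{2})^n-\frac{3\sqrt{2}}{64}(3+2\sqrt{2})^n+\frac{17+12\sqrt{2}}{16}n(3+2\sqrt{2})^n.$$
   Context: Pyrene system: draw the hexagonal lattice so that every hexagon has two vertical sides; horizontally adjacent hexagons then share a vertical edge. For $n\ge1$, $H_n$ is the hexagonal system (the plane graph formed by the vertices and edges of the following $4n$ hexagons) consisting of a horizontal linear row of $2n$ hexagons $h_{1,1},h_{1,2},\dots,h_{n,1},h_{n,2}$, consecutive ones sharing a vertical edge, together with, for each $i$, a hexagon $s_{i,1}$ directly above and a hexagon $s_{i,2}$ directly below the common edge of $h_{i,1}$ and $h_{i,2}$ (each sharing an edge with both $h_{i,1}$ and $h_{i,2}$). $H_0$ is the null graph, which has one (empty) perfect matching with anti-forcing number $0$. For a perfect matching $M$ of $G$, an anti-forcing set of $M$ is a set $S\subseteq E(G)\setminus M$ such that $M$ is the unique perfect matching of $G-S$; the anti-forcing number $af(G,M)$ is the minimum size of an anti-forcing set of $M$. The sum is over all perfect matchings $M$ of $H_n$ (equivalently, it is $\frac{d}{dx}Af(H_n,x)|_{x=1}$ with $Af(G,x)=\sum_M x^{af(G,M)}$). *)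

theory Defs
  imports Complex_Main
begin

text \<open>A hexagon with two
vertical sides and centre (x,y) has vertices (x,y+2),(x+1,y+1),(x+1,y-1),(x,y-2),
(x-1,y-1),(x-1,y+1) (vertical coordinate rescaled). Horizontally adjacent hexagons
have centres differing by (2,0); the hexagon directly above (below) the common
vertical edge of hexagons centred at (x,0),(x+2,0) is centred at (x+1,3) ((x+1,-3)).\<close>

type_synonym vert = "int \<times> int"

definition hex_verts :: "int \<times> int \<Rightarrow> vert set" where
  "hex_verts c = (case c of (x,y) \<Rightarrow>
     {(x,y+2),(x+1,y+1),(x+1,y-1),(x,y-2),(x-1,y-1),(x-1,y+1)})"

definition hex_edges :: "int \<times> int \<Rightarrow> vert set set" where
  "hex_edges c = (case c of (x,y) \<Rightarrow>
     {{(x,y+2),(x+1,y+1)}, {(x+1,y+1),(x+1,y-1)}, {(x+1,y-1),(x,y-2)},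
      {(x,y-2),(x-1,y-1)}, {(x-1,y-1),(x-1,y+1)}, {(x-1,y+1),(x,y+2)}})"

text \<open>Centres of the 4n hexagons of the pyrene system H_n:
 h_{i,1}, h_{i,2} at (4(i-1),0), (4(i-1)+2,0); s_{i,1} at (4(i-1)+1,3); s_{i,2} at (4(i-1)+1,-3).\<close>
definition pyrene_hexes :: "nat \<Rightarrow> (int \<times> int) set" where
  "pyrene_hexes n = {(int (2*k), 0) | k. k < 2*n}
                  \<union> {(int (4*i) + 1, 3) | i. i < n}
                  \<union> {(int (4*i) + 1, -3) | i. i < n}"

definition pyrene_V :: "nat \<Rightarrow> vert set" where
  "pyrene_V n = (\<Union>c\<in>pyrene_hexes n. hex_verts c)"

definition pyrene_E :: "nat \<Rightarrow> vert set set" where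
  "pyrene_E n = (\<Union>c\<in>pyrene_hexes n. hex_edges c)"

text \<open>Graphs are given by a vertex set V and a set E of 2-element edges.\<close>
definition perfect_matching :: "'a set \<Rightarrow> 'a set set \<Rightarrow> 'a set set \<Rightarrow> bool" where
  "perfect_matching V E M \<longleftrightarrow> M \<subseteq> E \<and> (\<forall>v\<in>V. \<exists>!e. e \<in> M \<and> v \<in> e)"

definition anti_forcing_set :: "'a set \<Rightarrow> 'a set set \<Rightarrow> 'a set set \<Rightarrow> 'a set set \<Rightarrow> bool" where
  "anti_forcing_set V E M S \<longleftrightarrow> S \<subseteq> E - M \<and>
     (\<forall>M'. perfect_matching V (E - S) M' \<longleftrightarrow> M' = M)"

definition anti_forcing_number :: "'a set \<Rightarrow> 'a set set \<Rightarrow> 'a set set \<Rightarrow> nat" where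
  "anti_forcing_number V E M = (LEAST k. \<exists>S. anti_forcing_set V E M S \<and> card S = k)"

end

theory Submission
  imports Defs
begin

text \<open>A perfect matching of \<open>H\<^sub>n\<close> is determined unit by unit: each side of a pyrene unit is in
  one of four local states, the two sides agree in their use of the vertical edges, and
  neighbouring units interact only through the vertical rung they share. This identifies the perfect
  matchings with the words of length \<open>n\<close> over \<open>AA, AB, BA, BB, LL, RR\<close> without a factor \<open>RR LL\<close>.
  The anti-forcing number of such a matching is the cost of its word, the sum of the letter weights
  \<open>3, 2, 2, 3, 1, 1\<close>: an explicit set of that size forces the matching, and conversely for every unit
  of weight there is a rival perfect matching that differs from the given one only in edges charged
  to that unit, so that every anti-forcing set needs a separate edge for each of them. Splitting off
  the first letter gives second-order linear recurrences for the number of words and for their total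
  cost, with characteristic roots \<open>3 \<plusminus> 2\<surd>2\<close>, which the closed form solves.\<close>

section \<open>Perfect matchings and anti-forcing sets\<close>

lemma perfect_matching_Diff_iff:
  "perfect_matching V (E - S) M \<longleftrightarrow> perfect_matching V E M \<and> M \<inter> S = {}"
  unfolding perfect_matching_def by auto

lemma anti_forcing_set_iff:
  "anti_forcing_set V E M S \<longleftrightarrow> S \<subseteq> E - M \<and> perfect_matching V E M \<and>
     (\<forall>M'. perfect_matching V E M' \<and> M' \<noteq> M \<longrightarrow> M' \<inter> S \<noteq> {})"
  unfolding anti_forcing_set_def perfect_matching_Diff_iff by blast

lemma card_le_anti_forcing_set:
  assumes S: "anti_forcing_set V E M S" and "finite S"
    and rivals: "\<And>i. i \<in> I \<Longrightarrow> perfect_matching V E (R i) \<and> R i \<noteq> M"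
    and owner: "\<And>i e. i \<in> I \<Longrightarrow> e \<in> R i - M \<Longrightarrow> owner e = i"
  shows "card I \<le> card S"
proof -
  have "I \<subseteq> owner ` S"
  proof
    fix i assume i: "i \<in> I"
    have "R i \<inter> S \<noteq> {}" using S rivals[OF i] unfolding anti_forcing_set_iff by blast
    then obtain e where e: "e \<in> R i" "e \<in> S" by blast
    then have "e \<notin> M" using S by (auto simp: anti_forcing_set_def)
    with e i owner show "i \<in> owner ` S" by force
  qed
  then show ?thesis using \<open>finite S\<close> by (rule surj_card_le[rotated])
qed

lemma anti_forcing_number_eqI:
  assumes "anti_forcing_set V E M S" "card S = k"
    and "\<And>S. anti_forcing_set V E M S \<Longrightarrow> k \<le> card S"
  shows "anti_forcing_number V E M = k"
  unfolding anti_forcing_number_def using assms by (intro Least_equality) auto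

lemma ex1_image_iff:
  assumes "inj g"
  shows "(\<exists>!e. e \<in> g ` A \<and> P e) \<longleftrightarrow> (\<exists>!d. d \<in> A \<and> P (g d))"
proof
  assume "\<exists>!e. e \<in> g ` A \<and> P e"
  then obtain d where "d \<in> A" "P (g d)" and "\<And>e. e \<in> g ` A \<and> P e \<Longrightarrow> e = g d"
    by blast
  then show "\<exists>!d. d \<in> A \<and> P (g d)"
    using injD[OF assms] by blast
next
  assume "\<exists>!d. d \<in> A \<and> P (g d)"
  then show "\<exists>!e. e \<in> g ` A \<and> P e" by blast
qed

lemma perfect_matching_image_iff:
  assumes "inj g" and incident: "\<And>a d. f a \<in> g d \<longleftrightarrow> d \<in> inc a"
  shows "perfect_matching (f ` V) (g ` E) (g ` N) \<longleftrightarrow>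
           N \<subseteq> E \<and> (\<forall>a\<in>V. \<exists>!d. d \<in> N \<and> d \<in> inc a)"
  unfolding perfect_matching_def ex1_image_iff[OF \<open>inj g\<close>] incident
  using \<open>inj g\<close> by (simp add: inj_image_subset_iff incident)

section \<open>A combinatorial encoding of the pyrene system\<close>

text \<open>Unit \<open>k < n\<close> of \<open>H\<^sub>n\<close> consists of the hexagons centred at \<open>(4k, 0)\<close>, \<open>(4k + 2, 0)\<close>
  and \<open>(4k + 1, \<plusminus>3)\<close>. Vertex \<open>(k, d, s)\<close> sits at \<open>(4k + kind_dx d, \<plusminus>kind_dy d)\<close>, with sign
  \<open>+\<close> iff \<open>s\<close>; the vertices of kind \<open>KL\<close> form the vertical edge on the left of unit \<open>k\<close>, so
  unit \<open>k\<close> shares them with unit \<open>k - 1\<close>, and there are \<open>KL\<close>-vertices for \<open>k = n\<close> as well.\<close>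

datatype vkind = KL | KA | KM | KB | K1 | K2 | K3

type_synonym vcode = "nat \<times> vkind \<times> bool"

fun kind_dx :: "vkind \<Rightarrow> int" where
  "kind_dx KL = -1" | "kind_dx KA = 0" | "kind_dx KM = 1" | "kind_dx KB = 2"
| "kind_dx K1 = 0" | "kind_dx K2 = 1" | "kind_dx K3 = 2"

fun kind_dy :: "vkind \<Rightarrow> int" where
  "kind_dy KL = 1" | "kind_dy KA = 2" | "kind_dy KM = 1" | "kind_dy KB = 2"
| "kind_dy K1 = 4" | "kind_dy K2 = 5" | "kind_dy K3 = 4"

definition vpos :: "vcode \<Rightarrow> vert" where
  "vpos a = (case a of (k, d, s) \<Rightarrow> (4 * int k + kind_dx d, if s then kind_dy d else - kind_dy d))"

lemma kind_eqI: "kind_dx d = kind_dx d' \<Longrightarrow> kind_dy d = kind_dy d' \<Longrightarrow> d = d'"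
  by (cases d; cases d'; simp)

lemma kind_dx_bounds: "-1 \<le> kind_dx d \<and> kind_dx d \<le> 2"
  by (cases d) auto

lemma kind_dy_pos: "0 < kind_dy d"
  by (cases d) auto

lemma vpos_eq_iff [simp]: "vpos a = vpos b \<longleftrightarrow> a = b"
proof
  assume eq: "vpos a = vpos b"
  obtain k d s k' d' s' where ab: "a = (k, d, s)" "b = (k', d', s')" by (cases a; cases b)
  have x: "4 * int k + kind_dx d = 4 * int k' + kind_dx d'"
    and y: "(if s then kind_dy d else - kind_dy d) = (if s' then kind_dy d' else - kind_dy d')"
    using eq by (simp_all add: ab vpos_def)
  have "k = k'" using x kind_dx_bounds[of d] kind_dx_bounds[of d'] by presburger
  moreover have "s = s'" using y kind_dy_pos[of d] kind_dy_pos[of d'] by (cases s; cases s'; simp)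
  moreover have "d = d'" using x y kind_eqI[of d d'] \<open>k = k'\<close> \<open>s = s'\<close> by (simp split: if_splits)
  ultimately show "a = b" using ab by simp
qed simp

text \<open>\<open>Side k s e\<close> is an edge on side \<open>s\<close> (top iff \<open>s\<close>) of unit \<open>k\<close>, named by its endpoints
  (\<open>EBR\<close> joins \<open>KB\<close> to the \<open>KL\<close>-vertex of unit \<open>k + 1\<close>); \<open>Mid k\<close> is the vertical edge between
  the two central hexagons of unit \<open>k\<close> and \<open>Rung k\<close> the vertical edge of kind \<open>KL\<close>.\<close>

datatype side_edge = ELA | EAM | EMB | EBR | EA1 | E12 | E23 | E3B

datatype edge = Side nat bool side_edge | Mid nat | Rung nat

fun edge_ends :: "edge \<Rightarrow> vcode \<times> vcode" where
  "edge_ends (Side k s ELA) = ((k, KL, s), (k, KA, s))"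
| "edge_ends (Side k s EAM) = ((k, KA, s), (k, KM, s))"
| "edge_ends (Side k s EMB) = ((k, KM, s), (k, KB, s))"
| "edge_ends (Side k s EBR) = ((k, KB, s), (Suc k, KL, s))"
| "edge_ends (Side k s EA1) = ((k, KA, s), (k, K1, s))"
| "edge_ends (Side k s E12) = ((k, K1, s), (k, K2, s))"
| "edge_ends (Side k s E23) = ((k, K2, s), (k, K3, s))"
| "edge_ends (Side k s E3B) = ((k, K3, s), (k, KB, s))"
| "edge_ends (Mid k) = ((k, KM, True), (k, KM, False))"
| "edge_ends (Rung k) = ((k, KL, True), (k, KL, False))"

definition edge_pos :: "edge \<Rightarrow> vert set" where
  "edge_pos d = {vpos (fst (edge_ends d)), vpos (snd (edge_ends d))}"

lemma edge_pos_eq_iff [simp]: "edge_pos d = edge_pos d' \<longleftrightarrow> d = d'"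
  by (cases d rule: edge_ends.cases; cases d' rule: edge_ends.cases;
      simp add: edge_pos_def doubleton_eq_iff)

lemma inj_edge_pos: "inj edge_pos"
  by (rule injI) simp

fun incident_edges :: "vcode \<Rightarrow> edge set" where
  "incident_edges (k, KL, s) = {Rung k, Side k s ELA} \<union> (if 0 < k then {Side (k - 1) s EBR} else {})"
| "incident_edges (k, KA, s) = {Side k s ELA, Side k s EAM, Side k s EA1}"
| "incident_edges (k, KM, s) = {Side k s EAM, Side k s EMB, Mid k}"
| "incident_edges (k, KB, s) = {Side k s EMB, Side k s EBR, Side k s E3B}"
| "incident_edges (k, K1, s) = {Side k s EA1, Side k s E12}"
| "incident_edges (k, K2, s) = {Side k s E12, Side k s E23}"
| "incident_edges (k, K3, s) = {Side k s E23, Side k s E3B}"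

lemma vpos_in_edge_pos_iff: "vpos a \<in> edge_pos d \<longleftrightarrow> d \<in> incident_edges a"
proof -
  obtain k t s where "a = (k, t, s)" by (cases a)
  then show ?thesis
    by (cases d rule: edge_ends.cases; cases t; auto simp: edge_pos_def)
qed

definition unit_verts :: "nat \<Rightarrow> vcode set" where
  "unit_verts k = {k} \<times> UNIV \<times> UNIV \<union> {Suc k} \<times> {KL} \<times> UNIV"

definition unit_edges :: "nat \<Rightarrow> edge set" where
  "unit_edges k = range (\<lambda>(s, e). Side k s e) \<union> {Mid k, Rung k, Rung (Suc k)}"

definition pyr_verts :: "nat \<Rightarrow> vcode set" where
  "pyr_verts n = {(k, d, s). if d = KL then k \<le> n \<and> 0 < n else k < n}"

definition pyr_edges :: "nat \<Rightarrow> edge set" where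
  "pyr_edges n = {d. case d of Side k s e \<Rightarrow> k < n | Mid k \<Rightarrow> k < n | Rung k \<Rightarrow> k \<le> n \<and> 0 < n}"

lemma mem_pyr_verts [simp]:
  "(k, d, s) \<in> pyr_verts n \<longleftrightarrow> (if d = KL then k \<le> n \<and> 0 < n else k < n)"
  by (simp add: pyr_verts_def)

lemma mem_pyr_edges [simp]:
  "Side k s e \<in> pyr_edges n \<longleftrightarrow> k < n"
  "Mid k \<in> pyr_edges n \<longleftrightarrow> k < n"
  "Rung k \<in> pyr_edges n \<longleftrightarrow> k \<le> n \<and> 0 < n"
  by (simp_all add: pyr_edges_def)

lemma le_imp_below_or_Suc_below:
  assumes "k \<le> n" "0 < n"
  shows "\<exists>m\<in>{..<n}. k = m \<or> k = Suc m"
proof (cases "k < n")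
  case False
  then show ?thesis using assms by (intro bexI[of _ "n - 1"]) auto
qed auto

lemma pyr_verts_eq_UN: "pyr_verts n = (\<Union>k<n. unit_verts k)"
proof (rule set_eqI)
  fix a :: vcode
  obtain k d s where a: "a = (k, d, s)" by (cases a)
  show "a \<in> pyr_verts n \<longleftrightarrow> a \<in> (\<Union>k<n. unit_verts k)"
    using le_imp_below_or_Suc_below[of k n] by (auto simp: a unit_verts_def)
qed

lemma pyr_edges_eq_UN: "pyr_edges n = (\<Union>k<n. unit_edges k)"
proof (rule set_eqI)
  fix d :: edge
  show "d \<in> pyr_edges n \<longleftrightarrow> d \<in> (\<Union>k<n. unit_edges k)"
    using le_imp_below_or_Suc_below by (cases d) (auto simp: unit_edges_def)
qed

lemma pyrene_hexes_eq_UN: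
  "pyrene_hexes n = (\<Union>k<n. {(4 * int k, 0), (4 * int k + 2, 0), (4 * int k + 1, 3), (4 * int k + 1, -3)})"
proof -
  have halves: "{..<2 * n} = (\<Union>k<n. {2 * k, Suc (2 * k)})"
  proof (intro set_eqI iffI)
    fix j assume "j \<in> {..<2 * n}"
    then show "j \<in> (\<Union>k<n. {2 * k, Suc (2 * k)})"
      by (intro UN_I[of "j div 2"]) auto
  qed auto
  have "{(int (2 * j), 0::int) | j. j < 2 * n} = (\<lambda>j. (int (2 * j), 0)) ` {..<2 * n}"
    by auto
  also have "\<dots> = (\<lambda>j. (int (2 * j), 0)) ` (\<Union>k<n. {2 * k, Suc (2 * k)})"
    by (simp only: halves)
  also have "\<dots> = (\<Union>k<n. {(4 * int k, 0), (4 * int k + 2, 0)})"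
    by (simp add: image_UN algebra_simps)
  finally show ?thesis unfolding pyrene_hexes_def by auto
qed

lemma hex_verts_h1:
  "hex_verts (4 * int k, 0) =
     vpos ` {(k, KA, True), (k, KM, True), (k, KM, False), (k, KA, False), (k, KL, False), (k, KL, True)}"
  by (simp add: hex_verts_def vpos_def algebra_simps)

lemma hex_verts_h2:
  "hex_verts (4 * int k + 2, 0) =
     vpos ` {(k, KB, True), (Suc k, KL, True), (Suc k, KL, False), (k, KB, False), (k, KM, False), (k, KM, True)}"
  by (simp add: hex_verts_def vpos_def algebra_simps)

lemma hex_verts_s1:
  "hex_verts (4 * int k + 1, 3) =
     vpos ` {(k, K2, True), (k, K3, True), (k, KB, True), (k, KM, True), (k, KA, True), (k, K1, True)}"
  by (simp add: hex_verts_def vpos_def algebra_simps)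

lemma hex_verts_s2:
  "hex_verts (4 * int k + 1, -3) =
     vpos ` {(k, KM, False), (k, KB, False), (k, K3, False), (k, K2, False), (k, K1, False), (k, KA, False)}"
  by (simp add: hex_verts_def vpos_def algebra_simps)

lemma hex_edges_h1:
  "hex_edges (4 * int k, 0) =
     edge_pos ` {Side k True EAM, Mid k, Side k False EAM, Side k False ELA, Rung k, Side k True ELA}"
  by (simp add: hex_edges_def edge_pos_def vpos_def algebra_simps insert_commute)

lemma hex_edges_h2:
  "hex_edges (4 * int k + 2, 0) =
     edge_pos ` {Side k True EBR, Rung (Suc k), Side k False EBR, Side k False EMB, Mid k, Side k True EMB}"
  by (simp add: hex_edges_def edge_pos_def vpos_def algebra_simps insert_commute)

lemma hex_edges_s1:
  "hex_edges (4 * int k + 1, 3) =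
     edge_pos ` {Side k True E23, Side k True E3B, Side k True EMB, Side k True EAM, Side k True EA1, Side k True E12}"
  by (simp add: hex_edges_def edge_pos_def vpos_def algebra_simps insert_commute)

lemma hex_edges_s2:
  "hex_edges (4 * int k + 1, -3) =
     edge_pos ` {Side k False EMB, Side k False E3B, Side k False E23, Side k False E12, Side k False EA1, Side k False EAM}"
  by (simp add: hex_edges_def edge_pos_def vpos_def algebra_simps insert_commute)

lemma unit_verts_eq:
  "unit_verts k =
     {(k, KA, True), (k, KM, True), (k, KM, False), (k, KA, False), (k, KL, False), (k, KL, True)} \<union>
     {(k, KB, True), (Suc k, KL, True), (Suc k, KL, False), (k, KB, False), (k, KM, False), (k, KM, True)} \<union>
     {(k, K2, True), (k, K3, True), (k, KB, True), (k, KM, True), (k, KA, True), (k, K1, True)} \<union>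
     {(k, KM, False), (k, KB, False), (k, K3, False), (k, K2, False), (k, K1, False), (k, KA, False)}"
  (is "_ = ?R")
proof (rule set_eqI)
  fix a :: vcode
  obtain k' d s where "a = (k', d, s)" by (cases a)
  then show "a \<in> unit_verts k \<longleftrightarrow> a \<in> ?R"
    by (cases d; cases s; auto simp: unit_verts_def)
qed

lemma unit_edges_eq:
  "unit_edges k =
     {Side k True EAM, Mid k, Side k False EAM, Side k False ELA, Rung k, Side k True ELA} \<union>
     {Side k True EBR, Rung (Suc k), Side k False EBR, Side k False EMB, Mid k, Side k True EMB} \<union>
     {Side k True E23, Side k True E3B, Side k True EMB, Side k True EAM, Side k True EA1, Side k True E12} \<union>
     {Side k False EMB, Side k False E3B, Side k False E23, Side k False E12, Side k False EA1, Side k False EAM}"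
  (is "_ = ?R")
proof (rule set_eqI)
  fix d :: edge
  show "d \<in> unit_edges k \<longleftrightarrow> d \<in> ?R"
  proof (cases d)
    case (Side k' s e)
    then show ?thesis by (cases e; cases s; auto simp: unit_edges_def)
  qed (auto simp: unit_edges_def)
qed

lemma pyrene_V_eq: "pyrene_V n = vpos ` pyr_verts n"
proof -
  have "pyrene_V n = (\<Union>k<n. hex_verts (4 * int k, 0) \<union> hex_verts (4 * int k + 2, 0)
                         \<union> hex_verts (4 * int k + 1, 3) \<union> hex_verts (4 * int k + 1, -3))"
    unfolding pyrene_V_def pyrene_hexes_eq_UN by auto
  also have "\<dots> = (\<Union>k<n. vpos ` unit_verts k)"
    by (simp only: hex_verts_h1 hex_verts_h2 hex_verts_s1 hex_verts_s2 unit_verts_eq image_Un)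
  finally show ?thesis by (simp add: pyr_verts_eq_UN image_UN)
qed

lemma pyrene_E_eq: "pyrene_E n = edge_pos ` pyr_edges n"
proof -
  have "pyrene_E n = (\<Union>k<n. hex_edges (4 * int k, 0) \<union> hex_edges (4 * int k + 2, 0)
                         \<union> hex_edges (4 * int k + 1, 3) \<union> hex_edges (4 * int k + 1, -3))"
    unfolding pyrene_E_def pyrene_hexes_eq_UN by auto
  also have "\<dots> = (\<Union>k<n. edge_pos ` unit_edges k)"
    by (simp only: hex_edges_h1 hex_edges_h2 hex_edges_s1 hex_edges_s2 unit_edges_eq image_Un)
  finally show ?thesis by (simp add: pyr_edges_eq_UN image_UN)
qed

lemma finite_pyrene_E: "finite (pyrene_E n)"
proof -
  have "finite (hex_edges c)" for c by (cases c) (simp add: hex_edges_def)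
  then show ?thesis by (simp add: pyrene_E_def pyrene_hexes_eq_UN)
qed

definition code_pm :: "nat \<Rightarrow> edge set \<Rightarrow> bool" where
  "code_pm n N \<longleftrightarrow> N \<subseteq> pyr_edges n \<and> (\<forall>a\<in>pyr_verts n. \<exists>!d. d \<in> N \<and> d \<in> incident_edges a)"

lemma perfect_matching_pyrene_iff:
  "perfect_matching (pyrene_V n) (pyrene_E n) (edge_pos ` N) \<longleftrightarrow> code_pm n N"
  unfolding pyrene_V_eq pyrene_E_eq code_pm_def
  by (rule perfect_matching_image_iff[OF inj_edge_pos vpos_in_edge_pos_iff])

section \<open>Perfect matchings as words\<close>

text \<open>In a perfect matching each side of a unit is in one of four states: \<open>SA\<close> (edges
  \<open>EAM, E12, E3B\<close>), \<open>SB\<close> (\<open>EMB, E23, EA1\<close>), \<open>SL\<close> (\<open>ELA, E12, E3B\<close>, with \<open>Mid k\<close>) or \<open>SR\<close>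
  (\<open>EBR, EA1, E23\<close>, with \<open>Mid k\<close>). So a unit is described by
  a letter (top state first), and the only constraint between units is that \<open>RR\<close> cannot be
  followed by \<open>LL\<close>, as both would cover the rung between them.\<close>

datatype letter = AA | AB | BA | BB | LL | RR

datatype side_state = SA | SB | SL | SR

fun state_of :: "letter \<Rightarrow> bool \<Rightarrow> side_state" where
  "state_of AA s = SA"
| "state_of AB s = (if s then SA else SB)"
| "state_of BA s = (if s then SB else SA)"
| "state_of BB s = SB"
| "state_of LL s = SL"
| "state_of RR s = SR"

fun state_uses :: "side_state \<Rightarrow> side_edge \<Rightarrow> bool" where
  "state_uses SA e \<longleftrightarrow> e = EAM \<or> e = E12 \<or> e = E3B"
| "state_uses SB e \<longleftrightarrow> e = EMB \<or> e = E23 \<or> e = EA1"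
| "state_uses SL e \<longleftrightarrow> e = ELA \<or> e = E12 \<or> e = E3B"
| "state_uses SR e \<longleftrightarrow> e = EBR \<or> e = EA1 \<or> e = E23"

lemma state_of_eq_SL [simp]: "state_of x s = SL \<longleftrightarrow> x = LL"
  by (cases x) auto

lemma state_of_eq_SR [simp]: "state_of x s = SR \<longleftrightarrow> x = RR"
  by (cases x) auto

lemma state_uses_ELA [simp]: "state_uses st ELA \<longleftrightarrow> st = SL"
  by (cases st) auto

lemma state_uses_EBR [simp]: "state_uses st EBR \<longleftrightarrow> st = SR"
  by (cases st) auto

definition no_RR_LL :: "letter list \<Rightarrow> bool" where
  "no_RR_LL w \<longleftrightarrow> (\<forall>k. Suc k < length w \<longrightarrow> \<not> (w ! k = RR \<and> w ! Suc k = LL))"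

definition words :: "nat \<Rightarrow> letter list set" where
  "words n = {w. length w = n \<and> no_RR_LL w}"

definition rung_used :: "letter list \<Rightarrow> nat \<Rightarrow> bool" where
  "rung_used w k \<longleftrightarrow> \<not> (0 < k \<and> w ! (k - 1) = RR) \<and> \<not> (k < length w \<and> w ! k = LL)"

fun in_matching :: "letter list \<Rightarrow> edge \<Rightarrow> bool" where
  "in_matching w (Side k s e) \<longleftrightarrow> state_uses (state_of (w ! k) s) e"
| "in_matching w (Mid k) \<longleftrightarrow> w ! k = LL \<or> w ! k = RR"
| "in_matching w (Rung k) \<longleftrightarrow> rung_used w k"

definition matching_of :: "nat \<Rightarrow> letter list \<Rightarrow> edge set" where
  "matching_of n w = {d \<in> pyr_edges n. in_matching w d}"

lemma mem_matching_of: "d \<in> matching_of n w \<longleftrightarrow> d \<in> pyr_edges n \<and> in_matching w d"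
  by (simp add: matching_of_def)

lemma no_RR_LL_nth: "no_RR_LL w \<Longrightarrow> Suc k < length w \<Longrightarrow> w ! k = RR \<Longrightarrow> w ! Suc k \<noteq> LL"
  unfolding no_RR_LL_def by blast

lemma ex1_in_doubleton_iff:
  "x \<noteq> y \<Longrightarrow> (\<exists>!d. d \<in> N \<and> (d = x \<or> d = y)) \<longleftrightarrow> (x \<in> N \<longleftrightarrow> y \<notin> N)"
  by auto

lemma ex1_in_triple_iff:
  "x \<noteq> y \<Longrightarrow> x \<noteq> z \<Longrightarrow> y \<noteq> z \<Longrightarrow> (\<exists>!d. d \<in> N \<and> (d = x \<or> d = y \<or> d = z)) \<longleftrightarrow>
     (x \<in> N \<and> y \<notin> N \<and> z \<notin> N) \<or> (x \<notin> N \<and> y \<in> N \<and> z \<notin> N) \<or> (x \<notin> N \<and> y \<notin> N \<and> z \<in> N)"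
  by auto

lemma incident_edges_KL:
  "incident_edges (k, KL, s) =
     (if 0 < k then {Rung k, Side k s ELA, Side (k - 1) s EBR} else {Rung k, Side k s ELA})"
  by auto

lemma code_pm_matching_of:
  assumes "w \<in> words n"
  shows "code_pm n (matching_of n w)"
  unfolding code_pm_def
proof (intro conjI ballI)
  have len: "length w = n" and w: "no_RR_LL w" using assms by (auto simp: words_def)
  show "matching_of n w \<subseteq> pyr_edges n" by (auto simp: matching_of_def)
  fix a assume a: "a \<in> pyr_verts n"
  obtain k t s where a_eq: "a = (k, t, s)" by (cases a)
  show "\<exists>!d. d \<in> matching_of n w \<and> d \<in> incident_edges a"
  proof (cases "t = KL")
    case True
    then have k: "k \<le> n" "0 < n" using a a_eq by auto
    show ?thesis
    proof (cases "0 < k")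
      case True
      have "\<not> (w ! (k - 1) = RR \<and> w ! k = LL)" if "k < n"
        using no_RR_LL_nth[OF w, of "k - 1"] True that len by auto
      then show ?thesis
        using k len True unfolding a_eq \<open>t = KL\<close> incident_edges_KL if_P[OF True]
        by (simp add: ex1_in_triple_iff) (auto simp: mem_matching_of rung_used_def)
    next
      case False
      then show ?thesis
        using k len unfolding a_eq \<open>t = KL\<close> incident_edges_KL if_not_P[OF False]
        by (simp add: ex1_in_doubleton_iff) (auto simp: mem_matching_of rung_used_def)
    qed
  next
    case False
    then have "k < n" using a a_eq by auto
    then show ?thesis
      unfolding a_eq using False
      by (cases t; simp add: ex1_in_doubleton_iff ex1_in_triple_iff;
          cases "w ! k"; cases s; simp add: mem_matching_of)
  qed
qed

lemma all_side_edge_iff: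
  "(\<forall>e. P e) \<longleftrightarrow> P ELA \<and> P EAM \<and> P EMB \<and> P EBR \<and> P EA1 \<and> P E12 \<and> P E23 \<and> P E3B"
  by (metis side_edge.exhaust)

definition letter_at :: "edge set \<Rightarrow> nat \<Rightarrow> letter" where
  "letter_at N k =
     (if Side k True ELA \<in> N then LL
      else if Side k True EBR \<in> N then RR
      else if Side k True EAM \<in> N then (if Side k False EAM \<in> N then AA else AB)
      else (if Side k False EAM \<in> N then BA else BB))"

context
  fixes n N assumes pm: "code_pm n N"
begin

lemma code_pm_ex1: "a \<in> pyr_verts n \<Longrightarrow> \<exists>!d. d \<in> N \<and> d \<in> incident_edges a"
  using pm by (simp add: code_pm_def)

lemma side_state_exists:
  assumes "k < n"
  shows "\<exists>st. (\<forall>e. Side k s e \<in> N \<longleftrightarrow> state_uses st e) \<and> (Mid k \<in> N \<longleftrightarrow> st = SL \<or> st = SR)"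
proof -
  have "\<exists>!d. d \<in> N \<and> d \<in> incident_edges (k, t, s)" if "t \<noteq> KL" for t
    using code_pm_ex1[of "(k, t, s)"] assms that by simp
  from this[of KA] this[of KM] this[of KB] this[of K1] this[of K2] this[of K3]
  have "(Side k s ELA \<in> N \<and> Side k s EAM \<notin> N \<and> Side k s EA1 \<notin> N)
         \<or> (Side k s ELA \<notin> N \<and> Side k s EAM \<in> N \<and> Side k s EA1 \<notin> N)
         \<or> (Side k s ELA \<notin> N \<and> Side k s EAM \<notin> N \<and> Side k s EA1 \<in> N)"
    and "(Side k s EAM \<in> N \<and> Side k s EMB \<notin> N \<and> Mid k \<notin> N)
         \<or> (Side k s EAM \<notin> N \<and> Side k s EMB \<in> N \<and> Mid k \<notin> N)
         \<or> (Side k s EAM \<notin> N \<and> Side k s EMB \<notin> N \<and> Mid k \<in> N)"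
    and "(Side k s EMB \<in> N \<and> Side k s EBR \<notin> N \<and> Side k s E3B \<notin> N)
         \<or> (Side k s EMB \<notin> N \<and> Side k s EBR \<in> N \<and> Side k s E3B \<notin> N)
         \<or> (Side k s EMB \<notin> N \<and> Side k s EBR \<notin> N \<and> Side k s E3B \<in> N)"
    and "Side k s EA1 \<in> N \<longleftrightarrow> Side k s E12 \<notin> N"
    and "Side k s E12 \<in> N \<longleftrightarrow> Side k s E23 \<notin> N"
    and "Side k s E23 \<in> N \<longleftrightarrow> Side k s E3B \<notin> N"
    by (simp_all add: ex1_in_doubleton_iff ex1_in_triple_iff)
  then show ?thesis
    unfolding all_side_edge_iff
    by (intro exI[of _ "if Mid k \<in> N then (if Side k s EA1 \<in> N then SR else SL)
                        else (if Side k s EA1 \<in> N then SB else SA)"]) auto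
qed

lemma rung_cover:
  assumes "k \<le> n" "0 < n"
  shows "Rung k \<in> N \<longleftrightarrow> \<not> (k < n \<and> Side k s ELA \<in> N) \<and> \<not> (0 < k \<and> Side (k - 1) s EBR \<in> N)"
    and "\<not> (k < n \<and> Side k s ELA \<in> N \<and> 0 < k \<and> Side (k - 1) s EBR \<in> N)"
proof -
  have ex1: "\<exists>!d. d \<in> N \<and> d \<in> incident_edges (k, KL, s)"
    by (rule code_pm_ex1) (simp add: assms)
  have "Side n s ELA \<notin> N" using pm by (auto simp: code_pm_def)
  then have "Side k s ELA \<in> N \<Longrightarrow> k < n" using assms(1) by (cases "k = n") auto
  with ex1 show "Rung k \<in> N \<longleftrightarrow> \<not> (k < n \<and> Side k s ELA \<in> N) \<and> \<not> (0 < k \<and> Side (k - 1) s EBR \<in> N)"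
    and "\<not> (k < n \<and> Side k s ELA \<in> N \<and> 0 < k \<and> Side (k - 1) s EBR \<in> N)"
    by (cases "0 < k"; auto simp: incident_edges_KL ex1_in_doubleton_iff ex1_in_triple_iff)+
qed

lemma EBR_agree_if_ELA_agree:
  assumes "k < n" and "Side k True ELA \<in> N \<longleftrightarrow> Side k False ELA \<in> N"
  shows "Side k True EBR \<in> N \<longleftrightarrow> Side k False EBR \<in> N"
proof -
  obtain sT where "\<forall>e. Side k True e \<in> N \<longleftrightarrow> state_uses sT e" "Mid k \<in> N \<longleftrightarrow> sT = SL \<or> sT = SR"
    using side_state_exists[OF \<open>k < n\<close>] by blast
  moreover obtain sF where "\<forall>e. Side k False e \<in> N \<longleftrightarrow> state_uses sF e" "Mid k \<in> N \<longleftrightarrow> sF = SL \<or> sF = SR"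
    using side_state_exists[OF \<open>k < n\<close>] by blast
  ultimately show ?thesis using assms(2) by (cases sT; cases sF; simp)
qed

lemma sides_agree:
  "k < n \<Longrightarrow> (Side k True ELA \<in> N \<longleftrightarrow> Side k False ELA \<in> N) \<and> (Side k True EBR \<in> N \<longleftrightarrow> Side k False EBR \<in> N)"
proof (induction k)
  case 0
  then have "Side 0 True ELA \<in> N \<longleftrightarrow> Side 0 False ELA \<in> N"
    using rung_cover(1)[of 0 True] rung_cover(1)[of 0 False] by auto
  then show ?case using EBR_agree_if_ELA_agree[OF "0.prems"] by simp
next
  case (Suc k)
  then have "Side k True EBR \<in> N \<longleftrightarrow> Side k False EBR \<in> N" by simp
  then have "Side (Suc k) True ELA \<in> N \<longleftrightarrow> Side (Suc k) False ELA \<in> N"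
    using rung_cover[of "Suc k" True] rung_cover[of "Suc k" False] Suc.prems by auto
  then show ?case using EBR_agree_if_ELA_agree[OF Suc.prems] by simp
qed

lemma mem_iff_letter_at:
  assumes "k < n"
  shows "Side k s e \<in> N \<longleftrightarrow> state_uses (state_of (letter_at N k) s) e"
    and "Mid k \<in> N \<longleftrightarrow> letter_at N k = LL \<or> letter_at N k = RR"
proof -
  obtain sT where T: "\<forall>e. Side k True e \<in> N \<longleftrightarrow> state_uses sT e" "Mid k \<in> N \<longleftrightarrow> sT = SL \<or> sT = SR"
    using side_state_exists[OF assms] by blast
  obtain sF where F: "\<forall>e. Side k False e \<in> N \<longleftrightarrow> state_uses sF e" "Mid k \<in> N \<longleftrightarrow> sF = SL \<or> sF = SR"
    using side_state_exists[OF assms] by blast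
  have "state_uses sT ELA = state_uses sF ELA" "state_uses sT EBR = state_uses sF EBR"
    using sides_agree[OF assms] T F by auto
  then have "state_of (letter_at N k) True = sT \<and> state_of (letter_at N k) False = sF
      \<and> (Mid k \<in> N \<longleftrightarrow> letter_at N k = LL \<or> letter_at N k = RR)"
    using T F unfolding letter_at_def by (cases sT; cases sF; simp)
  then show "Side k s e \<in> N \<longleftrightarrow> state_uses (state_of (letter_at N k) s) e"
    and "Mid k \<in> N \<longleftrightarrow> letter_at N k = LL \<or> letter_at N k = RR"
    using T F by (cases s; auto)+
qed

lemma letter_at_eq_LL_iff: "k < n \<Longrightarrow> letter_at N k = LL \<longleftrightarrow> Side k True ELA \<in> N"
  using mem_iff_letter_at(1)[of k True ELA] by simp

lemma letter_at_eq_RR_iff: "k < n \<Longrightarrow> letter_at N k = RR \<longleftrightarrow> Side k True EBR \<in> N"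
  using mem_iff_letter_at(1)[of k True EBR] by simp

definition word_of :: "letter list" where
  "word_of = map (letter_at N) [0..<n]"

lemma word_of_in_words: "word_of \<in> words n"
  unfolding words_def no_RR_LL_def word_of_def
proof (intro CollectI conjI allI impI)
  fix k assume "Suc k < length (map (letter_at N) [0..<n])"
  then have k: "Suc k < n" by simp
  then show "\<not> (map (letter_at N) [0..<n] ! k = RR \<and> map (letter_at N) [0..<n] ! Suc k = LL)"
    using rung_cover(2)[of "Suc k" True] letter_at_eq_LL_iff[OF k] letter_at_eq_RR_iff[of k] by auto
qed simp

lemma matching_of_word_of: "N = matching_of n word_of"
proof (rule set_eqI)
  have sub: "N \<subseteq> pyr_edges n" using pm by (simp add: code_pm_def)
  fix d show "d \<in> N \<longleftrightarrow> d \<in> matching_of n word_of"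
  proof (cases d)
    case (Side k s e)
    then show ?thesis
      using sub mem_iff_letter_at(1)[of k s e] by (auto simp: mem_matching_of word_of_def)
  next
    case (Mid k)
    then show ?thesis
      using sub mem_iff_letter_at(2)[of k] by (auto simp: mem_matching_of word_of_def)
  next
    case (Rung k)
    show ?thesis
    proof (cases "k \<le> n \<and> 0 < n")
      case True
      have "rung_used word_of k \<longleftrightarrow> \<not> (0 < k \<and> Side (k - 1) True EBR \<in> N) \<and> \<not> (k < n \<and> Side k True ELA \<in> N)"
        unfolding rung_used_def word_of_def using True letter_at_eq_LL_iff[of k] letter_at_eq_RR_iff[of "k - 1"]
        by auto
      then show ?thesis using rung_cover(1)[of k True] True Rung by (auto simp: mem_matching_of)
    next
      case False
      then show ?thesis using sub Rung by (auto simp: mem_matching_of)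
    qed
  qed
qed

end

lemma code_pm_iff: "code_pm n N \<longleftrightarrow> (\<exists>w\<in>words n. N = matching_of n w)"
  using matching_of_word_of word_of_in_words code_pm_matching_of by blast

lemma letter_at_matching_of: "w \<in> words n \<Longrightarrow> k < n \<Longrightarrow> letter_at (matching_of n w) k = w ! k"
  by (cases "w ! k") (auto simp: letter_at_def mem_matching_of)

lemma inj_on_matching_of: "inj_on (matching_of n) (words n)"
proof (rule inj_onI)
  fix w w' assume w: "w \<in> words n" "w' \<in> words n" and eq: "matching_of n w = matching_of n w'"
  show "w = w'"
  proof (rule nth_equalityI)
    show "length w = length w'" using w by (simp add: words_def)
    fix k assume "k < length w"
    then have "k < n" using w by (simp add: words_def)
    then show "w ! k = w' ! k" using letter_at_matching_of w eq by metis
  qed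
qed

lemma perfect_matchings_pyrene:
  "{M. perfect_matching (pyrene_V n) (pyrene_E n) M} = (\<lambda>w. edge_pos ` matching_of n w) ` words n"
proof -
  have "M \<subseteq> edge_pos ` pyr_edges n" if "perfect_matching (pyrene_V n) (pyrene_E n) M" for M
    using that by (simp add: perfect_matching_def pyrene_E_eq)
  then have "perfect_matching (pyrene_V n) (pyrene_E n) M \<longleftrightarrow> (\<exists>N. M = edge_pos ` N \<and> code_pm n N)" for M
    by (metis perfect_matching_pyrene_iff subset_image_iff)
  then show ?thesis by (auto simp: code_pm_iff)
qed

lemma inj_on_edge_pos_matching_of: "inj_on (\<lambda>w. edge_pos ` matching_of n w) (words n)"
  using inj_on_matching_of inj_edge_pos by (simp add: inj_on_def inj_image_eq_iff)

section \<open>The anti-forcing number of a perfect matching\<close>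

fun weight :: "letter \<Rightarrow> nat" where
  "weight AA = 3" | "weight BB = 3" | "weight AB = 2" | "weight BA = 2" | "weight LL = 1" | "weight RR = 1"

definition cost :: "letter list \<Rightarrow> nat" where
  "cost w = sum_list (map weight w)"

lemma cost_eq_sum: "cost w = (\<Sum>k<length w. weight (w ! k))"
  unfolding cost_def by (simp add: sum_list_sum_nth atLeast0LessThan)

fun forcing_edges :: "nat \<Rightarrow> letter \<Rightarrow> edge set" where
  "forcing_edges k AA = {Mid k, Side k True EMB, Side k False EMB}"
| "forcing_edges k BB = {Mid k, Side k True EAM, Side k False EAM}"
| "forcing_edges k AB = {Side k False E12, Side k True E23}"
| "forcing_edges k BA = {Side k True E12, Side k False E23}"
| "forcing_edges k LL = {Rung k}"
| "forcing_edges k RR = {Rung (Suc k)}"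

definition forcing_set :: "letter list \<Rightarrow> edge set" where
  "forcing_set w = (\<Union>k<length w. forcing_edges k (w ! k))"

lemma card_forcing_set:
  assumes "no_RR_LL w"
  shows "card (forcing_set w) = cost w"
proof -
  have "card (forcing_set w) = (\<Sum>k<length w. card (forcing_edges k (w ! k)))"
    unfolding forcing_set_def
  proof (rule card_UN_disjoint)
    have "finite (forcing_edges k x)" for k x by (cases x) auto
    then show "\<forall>i\<in>{..<length w}. finite (forcing_edges i (w ! i))" by blast
    show "\<forall>i\<in>{..<length w}. \<forall>j\<in>{..<length w}. i \<noteq> j \<longrightarrow>
            forcing_edges i (w ! i) \<inter> forcing_edges j (w ! j) = {}"
    proof (intro ballI impI)
      fix i j assume ij: "i \<in> {..<length w}" "j \<in> {..<length w}" "i \<noteq> j"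
      have "\<not> (w ! i = RR \<and> w ! j = LL \<and> j = Suc i)" "\<not> (w ! j = RR \<and> w ! i = LL \<and> i = Suc j)"
        using no_RR_LL_nth[OF assms, of i] no_RR_LL_nth[OF assms, of j] ij by auto
      then show "forcing_edges i (w ! i) \<inter> forcing_edges j (w ! j) = {}"
        using ij(3) by (cases "w ! i"; cases "w ! j"; auto)
    qed
  qed simp
  also have "\<dots> = cost w"
  proof -
    have "card (forcing_edges k x) = weight x" for k x by (cases x) auto
    then show ?thesis by (simp add: cost_eq_sum)
  qed
  finally show ?thesis .
qed

lemma forcing_set_subset:
  assumes "w \<in> words n"
  shows "forcing_set w \<subseteq> pyr_edges n - matching_of n w"
proof
  fix d assume "d \<in> forcing_set w"
  then obtain k where "k < length w" "d \<in> forcing_edges k (w ! k)" by (auto simp: forcing_set_def)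
  with assms show "d \<in> pyr_edges n - matching_of n w"
    by (cases "w ! k") (auto simp: words_def mem_matching_of rung_used_def)
qed

lemma forcing_edges_meet_inner:
  assumes "x \<noteq> LL" "x \<noteq> RR" "w' ! k \<noteq> x"
  shows "\<exists>d\<in>forcing_edges k x. in_matching w' d"
  using assms by (cases x; cases "w' ! k"; simp)

text \<open>Where \<open>w\<close> and \<open>w'\<close> differ only in letters \<open>LL\<close> and \<open>RR\<close> of \<open>w\<close>, the rightmost such \<open>RR\<close>
  or else the leftmost such \<open>LL\<close> has its rung used by \<open>w'\<close>.\<close>

lemma rung_used_after_last_RR:
  assumes "w \<in> words n" "w' \<in> words n" "k < n" "w ! k = RR" "w' ! k \<noteq> RR"
    and outer: "\<And>i. i < n \<Longrightarrow> w ! i \<noteq> w' ! i \<Longrightarrow> w ! i = LL \<or> w ! i = RR"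
    and last: "\<And>i. k < i \<Longrightarrow> i < n \<Longrightarrow> w ! i = RR \<Longrightarrow> w ! i = w' ! i"
  shows "rung_used w' (Suc k)"
proof -
  have "\<not> (Suc k < n \<and> w' ! Suc k = LL)"
  proof
    assume *: "Suc k < n \<and> w' ! Suc k = LL"
    then have "w ! Suc k \<noteq> LL" using no_RR_LL_nth[of w k] assms(1,4) by (simp add: words_def)
    with * show False using outer[of "Suc k"] last[of "Suc k"] by auto
  qed
  then show ?thesis using assms(2,5) by (simp add: rung_used_def words_def)
qed

lemma rung_used_at_first_LL:
  assumes "w \<in> words n" "k < n" "w ! k = LL" "w' ! k \<noteq> LL"
    and first: "\<And>i. i < k \<Longrightarrow> w ! i = w' ! i"
  shows "rung_used w' k"
proof -
  have "w ! (k - 1) \<noteq> RR" if "0 < k"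
    using no_RR_LL_nth[of w "k - 1"] assms(1-3) that by (auto simp: words_def)
  then show ?thesis using first[of "k - 1"] assms(4) by (auto simp: rung_used_def)
qed

lemma forcing_edges_meet:
  assumes w: "w \<in> words n" and w': "w' \<in> words n" and "w \<noteq> w'"
  shows "\<exists>k<n. \<exists>d\<in>forcing_edges k (w ! k). in_matching w' d"
proof -
  have len: "length w = n" "length w' = n" using w w' by (auto simp: words_def)
  define D where "D = {k. k < n \<and> w ! k \<noteq> w' ! k}"
  have "finite D" by (simp add: D_def)
  have "D \<noteq> {}"
    using \<open>w \<noteq> w'\<close> len nth_equalityI[of w w'] by (auto simp: D_def)
  show ?thesis
  proof (cases "\<exists>k\<in>D. w ! k \<noteq> LL \<and> w ! k \<noteq> RR")
    case True
    then show ?thesis using forcing_edges_meet_inner by (fastforce simp: D_def)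
  next
    case outer: False
    show ?thesis
    proof (cases "\<exists>k\<in>D. w ! k = RR")
      case True
      define k where "k = Max {k\<in>D. w ! k = RR}"
      have "k \<in> {k\<in>D. w ! k = RR}"
        unfolding k_def using True \<open>finite D\<close> by (intro Max_in) auto
      moreover have "i \<le> k" if "i \<in> D" "w ! i = RR" for i
        unfolding k_def using that \<open>finite D\<close> by (intro Max_ge) auto
      ultimately have "rung_used w' (Suc k)"
        using outer by (intro rung_used_after_last_RR[OF w w']) (fastforce simp: D_def)+
      then show ?thesis using \<open>k \<in> _\<close> by (auto simp: D_def)
    next
      case False
      define k where "k = Min D"
      have "k \<in> D" unfolding k_def using \<open>finite D\<close> \<open>D \<noteq> {}\<close> by (rule Min_in)
      moreover have "i < k \<Longrightarrow> w ! i = w' ! i" for i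
        unfolding k_def using \<open>finite D\<close> Min_le[of D i] \<open>k \<in> D\<close> by (fastforce simp: D_def k_def)
      ultimately have "rung_used w' k" "w ! k = LL"
        using outer False by (auto simp: D_def intro!: rung_used_at_first_LL[OF w])
      then show ?thesis using \<open>k \<in> D\<close> by (auto simp: D_def)
    qed
  qed
qed

lemma forcing_set_meets:
  assumes w: "w \<in> words n" and w': "w' \<in> words n" and "w \<noteq> w'"
  shows "forcing_set w \<inter> matching_of n w' \<noteq> {}"
proof -
  obtain k d where "k < n" "d \<in> forcing_edges k (w ! k)" "in_matching w' d"
    using forcing_edges_meet[OF assms] by blast
  then have "d \<in> forcing_set w" using w by (auto simp: forcing_set_def words_def)
  moreover have "d \<in> pyr_edges n" using forcing_set_subset[OF w] \<open>d \<in> forcing_set w\<close> by blast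
  ultimately show ?thesis using \<open>in_matching w' d\<close> by (auto simp: mem_matching_of)
qed

text \<open>The \<open>weight (w ! k)\<close> rival words used for the lower bound at unit \<open>k\<close>: letter \<open>k\<close> is
  changed in the \<open>j\<close>-th way, and where this would create a factor \<open>RR LL\<close> the adjacent
  letter is changed as well.\<close>

fun flip :: "letter \<Rightarrow> nat \<Rightarrow> letter" where
  "flip AA j = (if j = 0 then BA else if j = 1 then AB else LL)"
| "flip BB j = (if j = 0 then AB else if j = 1 then BA else RR)"
| "flip AB j = (if j = 0 then BB else AA)"
| "flip BA j = (if j = 0 then AA else BB)"
| "flip LL j = AA"
| "flip RR j = BB"

definition neighbour :: "letter list \<Rightarrow> nat \<Rightarrow> nat \<Rightarrow> letter list" where
  "neighbour w k j =
     (if flip (w ! k) j = LL \<and> 0 < k \<and> w ! (k - 1) = RR then w[k - 1 := AA, k := LL]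
      else if flip (w ! k) j = RR \<and> Suc k < length w \<and> w ! Suc k = LL then w[Suc k := BB, k := RR]
      else w[k := flip (w ! k) j])"

text \<open>\<open>owner w d\<close> is the index \<open>(k, j)\<close> of the rival \<open>neighbour w k j\<close> that can gain the edge \<open>d\<close>
  over \<open>w\<close>; its values on other edges are irrelevant.\<close>

fun owner :: "letter list \<Rightarrow> edge \<Rightarrow> nat \<times> nat" where
  "owner w (Side k s e) = (case w ! k of
      AA \<Rightarrow> if e = ELA then (k, 2) else (k, if s then 0 else 1)
    | BB \<Rightarrow> if e = EBR then (k, 2) else (k, if s then 0 else 1)
    | AB \<Rightarrow> (k, if s then 0 else 1)
    | BA \<Rightarrow> (k, if s then 0 else 1)
    | LL \<Rightarrow> if e = EAM then (k, 0) else (k - 1, 2)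
    | RR \<Rightarrow> if e = EMB then (k, 0) else (Suc k, 2))"
| "owner w (Mid k) = (k, 2)"
| "owner w (Rung k) = (if k < length w \<and> w ! k = LL then (k, 0) else (k - 1, 0))"

lemma no_RR_LL_update:
  assumes "no_RR_LL w"
    and "x = LL \<Longrightarrow> \<not> (0 < k \<and> w ! (k - 1) = RR)"
    and "x = RR \<Longrightarrow> \<not> (Suc k < length w \<and> w ! Suc k = LL)"
  shows "no_RR_LL (w[k := x])"
  unfolding no_RR_LL_def
proof (intro allI impI)
  fix i assume i: "Suc i < length (w[k := x])"
  then have "\<not> (w ! i = RR \<and> w ! Suc i = LL)" using assms(1) by (simp add: no_RR_LL_def)
  then show "\<not> (w[k := x] ! i = RR \<and> w[k := x] ! Suc i = LL)"
    using i assms(2,3) by (cases "i = k"; cases "Suc i = k"; auto simp: nth_list_update)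
qed

lemma neighbour_in_words:
  assumes "w \<in> words n" "k < n"
  shows "neighbour w k j \<in> words n"
proof -
  have "no_RR_LL w" "length w = n" using assms(1) by (auto simp: words_def)
  then have "no_RR_LL (neighbour w k j)"
    using assms(2) by (auto simp: neighbour_def nth_list_update intro!: no_RR_LL_update)
  moreover have "length (neighbour w k j) = n" using \<open>length w = n\<close> by (simp add: neighbour_def)
  ultimately show ?thesis by (simp add: words_def)
qed

lemma neighbour_ne:
  assumes "k < length w"
  shows "neighbour w k j \<noteq> w"
proof -
  have "flip x j \<noteq> x" for x by (cases x) auto
  then have "neighbour w k j ! k \<noteq> w ! k" using assms by (auto simp: neighbour_def)
  then show ?thesis by metis
qed

lemma gained_edge_of_update:
  assumes k: "k < length w" and d: "in_matching (w[k := x]) d" "\<not> in_matching w d"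
  shows "(\<exists>s e. d = Side k s e \<and> state_uses (state_of x s) e \<and> \<not> state_uses (state_of (w ! k) s) e)
       \<or> (d = Mid k \<and> (x = LL \<or> x = RR) \<and> \<not> (w ! k = LL \<or> w ! k = RR))
       \<or> (d = Rung k \<and> \<not> (0 < k \<and> w ! (k - 1) = RR) \<and> x \<noteq> LL \<and> \<not> rung_used w k)
       \<or> (d = Rung (Suc k) \<and> x \<noteq> RR \<and> \<not> (Suc k < length w \<and> w ! Suc k = LL) \<and> \<not> rung_used w (Suc k))"
proof (cases d)
  case (Side i s e)
  then show ?thesis using d k by (cases "i = k") auto
next
  case (Mid i)
  then show ?thesis using d k by (cases "i = k") auto
next
  case (Rung i)
  have "rung_used (w[k := x]) i = rung_used w i" if "i \<noteq> k" "i \<noteq> Suc k"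
    using that by (auto simp: rung_used_def nth_list_update_neq)
  then show ?thesis using Rung d k by (cases "i = k \<or> i = Suc k") (auto simp: rung_used_def)
qed

lemma owner_flip:
  assumes k: "k < length w" and j: "j < weight (w ! k)"
    and d: "in_matching (w[k := flip (w ! k) j]) d" "\<not> in_matching w d"
  shows "owner w d = (k, j)"
  using gained_edge_of_update[OF k d] j
  by (cases "w ! k") (auto simp: rung_used_def numeral_3_eq_3 numeral_2_eq_2 less_Suc_eq split: if_splits)

lemma owner_flip_AA_after_RR:
  assumes k: "k < length w" "0 < k" and w: "w ! k = AA" "w ! (k - 1) = RR"
    and d: "in_matching (w[k - 1 := AA, k := LL]) d" "\<not> in_matching w d"
  shows "owner w d = (k, 2)"
proof (cases "in_matching (w[k - 1 := AA]) d")
  case True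
  have "d \<noteq> Rung k" using d(1) k by (auto simp: rung_used_def)
  moreover have "k - 1 < length w" "Suc (k - 1) = k" using k by auto
  ultimately show ?thesis using gained_edge_of_update[of "k - 1" w AA d] True d(2) w
    by (auto simp: rung_used_def split: if_splits)
next
  case False
  with gained_edge_of_update[of k "w[k - 1 := AA]" LL d] d(1) k w show ?thesis
    by (auto simp: rung_used_def nth_list_update split: if_splits)
qed

lemma owner_flip_BB_before_LL:
  assumes k: "Suc k < length w" and w: "w ! k = BB" "w ! Suc k = LL"
    and d: "in_matching (w[Suc k := BB, k := RR]) d" "\<not> in_matching w d"
  shows "owner w d = (k, 2)"
proof (cases "in_matching (w[Suc k := BB]) d")
  case True
  have "d \<noteq> Rung (Suc k)" using d(1) k by (auto simp: rung_used_def)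
  with gained_edge_of_update[of "Suc k" w BB d] True d(2) k w show ?thesis
    by (auto simp: rung_used_def split: if_splits)
next
  case False
  with gained_edge_of_update[of k "w[Suc k := BB]" RR d] d(1) k w show ?thesis
    by (auto simp: rung_used_def nth_list_update split: if_splits)
qed

lemma owner_neighbour:
  assumes k: "k < length w" and j: "j < weight (w ! k)"
    and d: "in_matching (neighbour w k j) d" "\<not> in_matching w d"
  shows "owner w d = (k, j)"
proof -
  have LL: "w ! k = AA \<and> j = 2" if "flip (w ! k) j = LL"
    using that j by (cases "w ! k") (auto split: if_splits)
  have RR: "w ! k = BB \<and> j = 2" if "flip (w ! k) j = RR"
    using that j by (cases "w ! k") (auto split: if_splits)
  show ?thesis
  proof (cases "flip (w ! k) j = LL \<and> 0 < k \<and> w ! (k - 1) = RR")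
    case True
    then have "neighbour w k j = w[k - 1 := AA, k := LL]" by (simp add: neighbour_def)
    then show ?thesis using d k True LL owner_flip_AA_after_RR[of k w d] by simp
  next
    case notL: False
    show ?thesis
    proof (cases "flip (w ! k) j = RR \<and> Suc k < length w \<and> w ! Suc k = LL")
      case True
      then have "neighbour w k j = w[Suc k := BB, k := RR]" by (auto simp: neighbour_def)
      then show ?thesis using d True RR owner_flip_BB_before_LL[of k w d] by simp
    next
      case False
      then have "neighbour w k j = w[k := flip (w ! k) j]" using notL by (auto simp: neighbour_def)
      then show ?thesis using d k j owner_flip[of k w j d] by simp
    qed
  qed
qed
lemma perfect_matching_pyrene_matching_of:
  assumes "w \<in> words n"
  shows "perfect_matching (pyrene_V n) (pyrene_E n) (edge_pos ` matching_of n w)"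
proof -
  have "edge_pos ` matching_of n w \<in> (\<lambda>w. edge_pos ` matching_of n w) ` words n"
    using assms by (rule imageI)
  then show ?thesis by (simp add: perfect_matchings_pyrene[symmetric])
qed

lemma anti_forcing_set_forcing_set:
  assumes w: "w \<in> words n"
  shows "anti_forcing_set (pyrene_V n) (pyrene_E n) (edge_pos ` matching_of n w) (edge_pos ` forcing_set w)"
  unfolding anti_forcing_set_iff
proof (intro conjI allI impI)
  have "edge_pos ` forcing_set w \<subseteq> edge_pos ` (pyr_edges n - matching_of n w)"
    using forcing_set_subset[OF w] by (rule image_mono)
  then show "edge_pos ` forcing_set w \<subseteq> pyrene_E n - edge_pos ` matching_of n w"
    by (simp add: pyrene_E_eq image_set_diff[OF inj_edge_pos])
  show "perfect_matching (pyrene_V n) (pyrene_E n) (edge_pos ` matching_of n w)"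
    using perfect_matching_pyrene_matching_of[OF w] .
  fix M' assume M': "perfect_matching (pyrene_V n) (pyrene_E n) M' \<and> M' \<noteq> edge_pos ` matching_of n w"
  then have "M' \<in> (\<lambda>w. edge_pos ` matching_of n w) ` words n"
    by (simp add: perfect_matchings_pyrene[symmetric])
  then obtain w' where w': "w' \<in> words n" "M' = edge_pos ` matching_of n w'" by (rule imageE)
  with M' have "w' \<noteq> w" by blast
  then obtain d where "d \<in> forcing_set w" "d \<in> matching_of n w'"
    using forcing_set_meets[OF w w'(1)] by blast
  then show "M' \<inter> edge_pos ` forcing_set w \<noteq> {}" using w'(2) by blast
qed

lemma cost_le_anti_forcing_set:
  assumes w: "w \<in> words n"
    and S: "anti_forcing_set (pyrene_V n) (pyrene_E n) (edge_pos ` matching_of n w) S"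
  shows "cost w \<le> card S"
proof -
  have len: "length w = n" using w by (simp add: words_def)
  define I where "I = (SIGMA k:{..<n}. {..<weight (w ! k)})"
  define M where "M w' = edge_pos ` matching_of n w'" for w'
  have "finite S"
    using S finite_pyrene_E by (auto simp: anti_forcing_set_def intro: finite_subset)
  have "card I = cost w" by (simp add: I_def card_SigmaI cost_eq_sum len)
  moreover have "card I \<le> card S"
  proof (rule card_le_anti_forcing_set[OF S[folded M_def] \<open>finite S\<close>, where R = "\<lambda>(k, j). M (neighbour w k j)"])
    fix i assume "i \<in> I"
    then obtain k j where i: "i = (k, j)" "k < n" "j < weight (w ! k)" by (auto simp: I_def)
    have rival: "neighbour w k j \<in> words n" "neighbour w k j \<noteq> w"
      using neighbour_in_words[OF w i(2)] neighbour_ne[of k w j] i(2) len by auto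
    have "perfect_matching (pyrene_V n) (pyrene_E n) (M (neighbour w k j))"
      unfolding M_def by (rule perfect_matching_pyrene_matching_of[OF rival(1)])
    moreover have "M (neighbour w k j) \<noteq> M w"
      using inj_onD[OF inj_on_edge_pos_matching_of _ rival(1) w] rival(2) by (auto simp: M_def)
    ultimately show "perfect_matching (pyrene_V n) (pyrene_E n) ((\<lambda>(k, j). M (neighbour w k j)) i)
        \<and> (\<lambda>(k, j). M (neighbour w k j)) i \<noteq> M w"
      using i(1) by simp
    fix e assume "e \<in> (\<lambda>(k, j). M (neighbour w k j)) i - M w"
    then obtain d where d: "e = edge_pos d" "d \<in> matching_of n (neighbour w k j)" "d \<notin> matching_of n w"
      using i(1) by (auto simp: M_def)
    then have "owner w d = (k, j)"
      using owner_neighbour[of k w j d] i(2,3) len by (simp add: mem_matching_of)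
    then show "owner w (inv edge_pos e) = i"
      using d(1) i(1) inv_f_f[OF inj_edge_pos] by simp
  qed
  ultimately show ?thesis by simp
qed

lemma anti_forcing_number_matching_of:
  assumes "w \<in> words n"
  shows "anti_forcing_number (pyrene_V n) (pyrene_E n) (edge_pos ` matching_of n w) = cost w"
proof (rule anti_forcing_number_eqI)
  show "anti_forcing_set (pyrene_V n) (pyrene_E n) (edge_pos ` matching_of n w) (edge_pos ` forcing_set w)"
    using anti_forcing_set_forcing_set[OF assms] .
  show "card (edge_pos ` forcing_set w) = cost w"
    using assms card_forcing_set inj_edge_pos by (simp add: card_image inj_on_def words_def)
qed (rule cost_le_anti_forcing_set[OF assms])

lemma sum_anti_forcing_number_eq_sum_cost:
  "(\<Sum>M\<in>{M. perfect_matching (pyrene_V n) (pyrene_E n) M}. anti_forcing_number (pyrene_V n) (pyrene_E n) M)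
   = (\<Sum>w\<in>words n. cost w)"
  unfolding perfect_matchings_pyrene sum.reindex[OF inj_on_edge_pos_matching_of]
  by (simp add: anti_forcing_number_matching_of)

section \<open>Counting\<close>

lemma UNIV_letter: "(UNIV :: letter set) = {AA, AB, BA, BB, LL, RR}"
  by (auto intro: letter.exhaust)

instance letter :: finite
  by standard (simp add: UNIV_letter)

lemma finite_words: "finite (words n)"
proof -
  have "finite {w :: letter list. set w \<subseteq> UNIV \<and> length w = n}"
    by (rule finite_lists_length_eq) simp
  then show ?thesis by (rule finite_subset[rotated]) (auto simp: words_def)
qed

lemma words_0: "words 0 = {[]}"
  by (auto simp: words_def no_RR_LL_def)

lemma no_RR_LL_Cons: "no_RR_LL (x # w) \<longleftrightarrow> no_RR_LL w \<and> \<not> (x = RR \<and> w \<noteq> [] \<and> hd w = LL)"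
proof -
  have "no_RR_LL (x # w) \<longleftrightarrow> \<not> (x = RR \<and> 0 < length w \<and> w ! 0 = LL) \<and> no_RR_LL w"
    unfolding no_RR_LL_def
  proof (intro iffI conjI allI impI)
    fix k assume *: "\<forall>k. Suc k < length (x # w) \<longrightarrow> \<not> ((x # w) ! k = RR \<and> (x # w) ! Suc k = LL)"
    then show "\<not> (x = RR \<and> 0 < length w \<and> w ! 0 = LL)"
      by (metis length_Cons nth_Cons_0 nth_Cons_Suc Suc_less_eq)
    assume "Suc k < length w"
    then show "\<not> (w ! k = RR \<and> w ! Suc k = LL)" using *[rule_format, of "Suc k"] by simp
  next
    fix k
    assume "\<not> (x = RR \<and> 0 < length w \<and> w ! 0 = LL)
        \<and> (\<forall>k. Suc k < length w \<longrightarrow> \<not> (w ! k = RR \<and> w ! Suc k = LL))"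
      and "Suc k < length (x # w)"
    then show "\<not> ((x # w) ! k = RR \<and> (x # w) ! Suc k = LL)" by (cases k) auto
  qed
  then show ?thesis by (cases w) auto
qed

lemma words_Suc:
  "words (Suc n) = (\<Union>x. Cons x ` {w \<in> words n. \<not> (x = RR \<and> w \<noteq> [] \<and> hd w = LL)})"
proof (rule set_eqI)
  fix v
  show "v \<in> words (Suc n) \<longleftrightarrow> v \<in> (\<Union>x. Cons x ` {w \<in> words n. \<not> (x = RR \<and> w \<noteq> [] \<and> hd w = LL)})"
    by (cases v) (auto simp: words_def no_RR_LL_Cons)
qed

lemma words_Suc_starting_LL: "{w \<in> words (Suc n). w \<noteq> [] \<and> hd w = LL} = Cons LL ` words n"
  by (auto simp: words_Suc)

lemma sum_words_Suc:
  fixes f :: "letter list \<Rightarrow> 'a::ab_group_add"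
  shows "(\<Sum>v\<in>words (Suc n). f v)
       = (\<Sum>x\<in>UNIV. \<Sum>w\<in>words n. f (x # w)) - (\<Sum>w\<in>{w \<in> words n. w \<noteq> [] \<and> hd w = LL}. f (RR # w))"
proof -
  let ?B = "{w \<in> words n. w \<noteq> [] \<and> hd w = LL}"
  have "(\<Sum>v\<in>words (Suc n). f v)
      = (\<Sum>x\<in>UNIV. \<Sum>w\<in>{w \<in> words n. \<not> (x = RR \<and> w \<noteq> [] \<and> hd w = LL)}. f (x # w))"
    unfolding words_Suc by (subst sum.UNION_disjoint) (auto simp: finite_words sum.reindex)
  also have "\<dots> = (\<Sum>x\<in>UNIV. (\<Sum>w\<in>words n. f (x # w)) - (if x = RR then \<Sum>w\<in>?B. f (x # w) else 0))"
  proof (rule sum.cong)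
    fix x
    have "{w \<in> words n. \<not> (x = RR \<and> w \<noteq> [] \<and> hd w = LL)} = (if x = RR then words n - ?B else words n)"
      by auto
    then show "(\<Sum>w\<in>{w \<in> words n. \<not> (x = RR \<and> w \<noteq> [] \<and> hd w = LL)}. f (x # w))
             = (\<Sum>w\<in>words n. f (x # w)) - (if x = RR then \<Sum>w\<in>?B. f (x # w) else 0)"
      by (simp add: sum_diff finite_words)
  qed simp
  also have "\<dots> = (\<Sum>x\<in>UNIV. \<Sum>w\<in>words n. f (x # w)) - (\<Sum>w\<in>?B. f (RR # w))"
    by (simp add: sum_subtractf)
  finally show ?thesis .
qed

lemma sum_words_Suc_Suc:
  fixes f :: "letter list \<Rightarrow> 'a::ab_group_add"
  shows "(\<Sum>v\<in>words (n + 2). f v)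
       = (\<Sum>x\<in>UNIV. \<Sum>w\<in>words (n + 1). f (x # w)) - (\<Sum>w\<in>words n. f (RR # LL # w))"
proof -
  have "(\<Sum>w\<in>Cons LL ` words n. f (RR # w)) = (\<Sum>w\<in>words n. f (RR # LL # w))"
    by (simp add: sum.reindex)
  then show ?thesis
    using sum_words_Suc[of f "Suc n"] by (simp add: words_Suc_starting_LL)
qed

definition num_words :: "nat \<Rightarrow> real" where
  "num_words n = real (card (words n))"

definition total_cost :: "nat \<Rightarrow> real" where
  "total_cost n = (\<Sum>w\<in>words n. real (cost w))"

lemma cost_Cons: "cost (x # w) = weight x + cost w"
  by (simp add: cost_def)

lemma num_words_eq_sum: "num_words n = (\<Sum>w\<in>words n. 1)"
  by (simp add: num_words_def)

lemma num_words_base: "num_words 0 = 1" "num_words 1 = 6"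
proof -
  have "(\<Sum>w\<in>words (Suc 0). 1 :: real) = 6"
    by (simp only: sum_words_Suc) (simp add: words_0 UNIV_letter)
  then show "num_words 0 = 1" "num_words 1 = 6" by (simp_all add: num_words_eq_sum words_0)
qed

lemma total_cost_base: "total_cost 0 = 0" "total_cost 1 = 12"
  by (simp_all add: total_cost_def sum_words_Suc words_0 UNIV_letter cost_def)

lemma num_words_rec: "num_words (n + 2) = 6 * num_words (n + 1) - num_words n"
proof -
  have "num_words (n + 2) = (\<Sum>x\<in>(UNIV :: letter set). num_words (n + 1)) - num_words n"
    unfolding num_words_eq_sum by (simp only: sum_words_Suc_Suc)
  then show ?thesis by (simp add: UNIV_letter)
qed

lemma total_cost_rec:
  "total_cost (n + 2) = 6 * total_cost (n + 1) - total_cost n + 12 * num_words (n + 1) - 2 * num_words n"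
proof -
  have "total_cost (n + 2) = (\<Sum>x\<in>UNIV. weight x * num_words (n + 1) + total_cost (n + 1))
      - (2 * num_words n + total_cost n)"
    unfolding total_cost_def num_words_eq_sum sum_words_Suc_Suc
    by (simp add: cost_Cons sum.distrib sum_distrib_left mult.commute)
  then show ?thesis by (simp add: UNIV_letter)
qed

lemma sqrt_2_mult_sqrt_2: "sqrt 2 * (sqrt 2 * x) = 2 * (x :: real)"
  by (simp add: mult.assoc[symmetric])

lemma characteristic_root_power:
  fixes \<gamma> :: real
  assumes "\<gamma>\<^sup>2 = 6 * \<gamma> - 1"
  shows "\<gamma> ^ (n + 2) = 6 * \<gamma> ^ (n + 1) - \<gamma> ^ n"
proof -
  have "\<gamma> ^ (n + 2) = \<gamma> ^ n * \<gamma>\<^sup>2" by (simp add: power_add power2_eq_square)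
  then show ?thesis by (simp add: assms algebra_simps)
qed

text \<open>Each summand \<open>(p + q n) \<gamma>\<^sup>n\<close> of \<open>total_cost_closed\<close> satisfies the recurrence of \<open>total_cost\<close>,
  driven by the summand \<open>c \<gamma>\<^bsup>n+1\<^esup>\<close> of \<open>num_words_closed\<close> for the same root \<open>\<gamma>\<close>.\<close>

lemma characteristic_root_rec:
  fixes \<gamma> p q c :: real
  assumes root: "\<gamma>\<^sup>2 = 6 * \<gamma> - 1" and coeff: "q * (2 * \<gamma> - 6) = c * (12 * \<gamma> - 2)"
  shows "(p + q * real (n + 2)) * \<gamma> ^ (n + 2)
       = 6 * ((p + q * real (n + 1)) * \<gamma> ^ (n + 1)) - (p + q * real n) * \<gamma> ^ n
         + 12 * (c * \<gamma> ^ (n + 2)) - 2 * (c * \<gamma> ^ (n + 1))"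
proof -
  have expand: "(p + q * (m + 2)) * a2 - (6 * ((p + q * (m + 1)) * a1) - (p + q * m) * a0
      + 12 * (c * a2) - 2 * (c * a1))
    = (p + q * m) * (a2 - 6 * a1 + a0) + (q * (2 * a2 - 6 * a1) - c * (12 * a2 - 2 * a1))"
    for m a0 a1 a2 :: real
    by (simp add: algebra_simps)
  have "\<gamma> ^ (n + 2) - 6 * \<gamma> ^ (n + 1) + \<gamma> ^ n = 0"
    using characteristic_root_power[OF root] by simp
  moreover have "q * (2 * \<gamma> ^ (n + 2) - 6 * \<gamma> ^ (n + 1)) = c * (12 * \<gamma> ^ (n + 2) - 2 * \<gamma> ^ (n + 1))"
    using arg_cong[OF coeff, of "\<lambda>x. x * \<gamma> ^ (n + 1)"] by (simp add: algebra_simps)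
  ultimately show ?thesis
    using expand[of "real n" "\<gamma> ^ (n + 2)" "\<gamma> ^ (n + 1)" "\<gamma> ^ n"] by (simp add: ac_simps)
qed

definition num_words_closed :: "nat \<Rightarrow> real" where
  "num_words_closed n = sqrt 2 / 8 * (3 + 2 * sqrt 2) ^ (n + 1) - sqrt 2 / 8 * (3 - 2 * sqrt 2) ^ (n + 1)"

definition total_cost_closed :: "nat \<Rightarrow> real" where
  "total_cost_closed n = (- 3 * sqrt 2 / 64 + (17 + 12 * sqrt 2) / 16 * real n) * (3 + 2 * sqrt 2) ^ n
    + (3 * sqrt 2 / 64 + (17 - 12 * sqrt 2) / 16 * real n) * (3 - 2 * sqrt 2) ^ n"

lemma closed_forms_rec:
  "num_words_closed (n + 2) = 6 * num_words_closed (n + 1) - num_words_closed n"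
  "total_cost_closed (n + 2) = 6 * total_cost_closed (n + 1) - total_cost_closed n
     + 12 * num_words_closed (n + 1) - 2 * num_words_closed n"
proof -
  have "(3 + 2 * sqrt 2 :: real)\<^sup>2 = 6 * (3 + 2 * sqrt 2) - 1"
       "(3 - 2 * sqrt 2 :: real)\<^sup>2 = 6 * (3 - 2 * sqrt 2) - 1"
       "(17 + 12 * sqrt 2) / 16 * (2 * (3 + 2 * sqrt 2) - 6) = sqrt 2 / 8 * (12 * (3 + 2 * sqrt 2) - 2)"
       "(17 - 12 * sqrt 2) / 16 * (2 * (3 - 2 * sqrt 2) - 6) = - sqrt 2 / 8 * (12 * (3 - 2 * sqrt 2) - 2)"
    by (simp_all add: power2_eq_square field_simps sqrt_2_mult_sqrt_2)
  note rec = characteristic_root_rec[OF this(1,3)] characteristic_root_rec[OF this(2,4)]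
    and pow = characteristic_root_power[OF this(1), of "n + 1"] characteristic_root_power[OF this(2), of "n + 1"]
  show "num_words_closed (n + 2) = 6 * num_words_closed (n + 1) - num_words_closed n"
    unfolding num_words_closed_def using pow by (simp add: algebra_simps sqrt_2_mult_sqrt_2)
  show "total_cost_closed (n + 2) = 6 * total_cost_closed (n + 1) - total_cost_closed n
     + 12 * num_words_closed (n + 1) - 2 * num_words_closed n"
    unfolding total_cost_closed_def num_words_closed_def
    using rec[of "- 3 * sqrt 2 / 64" n] rec[of "3 * sqrt 2 / 64" n]
    by (simp add: algebra_simps sqrt_2_mult_sqrt_2)
qed

lemma closed_forms_base:
  "num_words_closed 0 = 1" "num_words_closed 1 = 6" "total_cost_closed 0 = 0" "total_cost_closed 1 = 12"
  by (simp_all add: num_words_closed_def total_cost_closed_def power2_eq_square field_simps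
      sqrt_2_mult_sqrt_2)

lemma num_words_total_cost_closed:
  "num_words n = num_words_closed n \<and> total_cost n = total_cost_closed n"
proof (induction n rule: induct_nat_012)
  case (ge2 n)
  then show ?case
    using num_words_rec[of n] total_cost_rec[of n] closed_forms_rec[of n]
    by (simp add: numeral_2_eq_2)
qed (simp_all add: num_words_base total_cost_base closed_forms_base flip: One_nat_def)

theorem theorem4p4:
  fixes n :: nat
  shows "real (\<Sum>M\<in>{M. perfect_matching (pyrene_V n) (pyrene_E n) M}.
                 anti_forcing_number (pyrene_V n) (pyrene_E n) M)
       = 3 * sqrt 2 / 64 * (3 - 2 * sqrt 2) ^ n
         + (17 - 12 * sqrt 2) / 16 * real n * (3 - 2 * sqrt 2) ^ n
         - 3 * sqrt 2 / 64 * (3 + 2 * sqrt 2) ^ n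
         + (17 + 12 * sqrt 2) / 16 * real n * (3 + 2 * sqrt 2) ^ n"
proof -
  have "real (\<Sum>M\<in>{M. perfect_matching (pyrene_V n) (pyrene_E n) M}.
                 anti_forcing_number (pyrene_V n) (pyrene_E n) M) = total_cost n"
    unfolding sum_anti_forcing_number_eq_sum_cost total_cost_def by simp
  also have "\<dots> = total_cost_closed n"
    using num_words_total_cost_closed by blast
  also have "\<dots> = 3 * sqrt 2 / 64 * (3 - 2 * sqrt 2) ^ n
         + (17 - 12 * sqrt 2) / 16 * real n * (3 - 2 * sqrt 2) ^ n
         - 3 * sqrt 2 / 64 * (3 + 2 * sqrt 2) ^ n
         + (17 + 12 * sqrt 2) / 16 * real n * (3 + 2 * sqrt 2) ^ n"
    by (simp add: total_cost_closed_def algebra_simps)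
  finally show ?thesis .
qed

end
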